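(* Let $L\subseteq\Sigma^*$ be a regular language and let $M=(M(L),\le_L)$ be its syntactic ordered monoid. Then $N^1(M)=\Theta(N^1(L))$ as functions of $n$.
   Context: Non-deterministic communication complexity: for $f:X\times Y\to\{0,1\}$ (Alice holds $x\in X$, Bob holds $y\in Y$), $N^1(f)$ is the minimum cost of a non-deterministic protocol for $f$; equivalently, up to an additive constant 2, $N^1(f)=\log_2 C^1(f)$, where $C^1(f)$ is the minimum number of rectangles $S\times T\subseteq X\times Y$ on which $f\equiv 1$ whose union is $f^{-1}(1)$. A finite ordered monoid $(M,\le)$ is a finite monoid with a partial order such that $x\le y$ implies $zx\le zy$ and $xz\le yz$ for all $z\in M$. An order ideal is a subset $I\subseteq M$ such that $y\in I$ and $x\le y$ imply $x\in I$. For a finite ordered monoid $M$ and an order ideal $I$, $N^1(M,I)(n)$ is $N^1$ of the function in which Alice receives $m_1,m_3,\dots,m_{2n-1}\in M$, Bob receives $m_2,m_4,\dots,m_{2n}\in M$, and the value is $1$ iff $m_1m_2\cdots m_{2n}\in I$; $N^1(M)(n)=\max_I N^1(M,I)(n)$ over all order ideals $I$ of $M$. For a language $L\subseteq\Sigma^*$, $N^1(L)(n)$ is $N^1$ of the function in which Alice receives $a_1,a_3,\dots,a_{2n-1}$, Bob receives $a_2,a_4,\dots,a_{2n}$, each $a_i\in\Sigma\cup\{\epsilon\}$ ($\epsilon$ the empty word), and the value is $1$ iff $a_1a_2\cdots a_{2n}\in L$. Asymptotic notation refers to $n\to\infty$. Syntactic ordered monoid: for $L\subseteq\Sigma^*$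 write $x\preceq_L y$ if for all $u,v\in\Sigma^*$, $uyv\in L\Rightarrow uxv\in L$, and $x\equiv_L y$ if $x\preceq_L y$ and $y\preceq_L x$. The syntactic monoid is $M(L)=\Sigma^*/\equiv_L$, and it is ordered by $[x]\le_L[y]$ iff $x\preceq_L y$; $(M(L),\le_L)$ is the syntactic ordered monoid. *)

theory Defs
  imports Complex_Main "HOL-Library.Landau_Symbols"
begin

definition one_cover :: "'x set \<Rightarrow> 'y set \<Rightarrow> ('x \<Rightarrow> 'y \<Rightarrow> bool) \<Rightarrow> ('x set \<times> 'y set) list \<Rightarrow> bool" where
  "one_cover X Y f Rs \<longleftrightarrow>
     (\<forall>(S,T) \<in> set Rs. S \<subseteq> X \<and> T \<subseteq> Y \<and> (\<forall>x\<in>S. \<forall>y\<in>T. f x y)) \<and>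
     (\<Union>(S,T) \<in> set Rs. S \<times> T) = {(x,y). x \<in> X \<and> y \<in> Y \<and> f x y}"

definition C1 :: "'x set \<Rightarrow> 'y set \<Rightarrow> ('x \<Rightarrow> 'y \<Rightarrow> bool) \<Rightarrow> nat" where
  "C1 X Y f = (LEAST k. \<exists>Rs. length Rs = k \<and> one_cover X Y f Rs)"

text \<open>N^1(f) = log_2 C^1(f) (the convention N^1 = log_2 C^1 up to additive constant;
  the empty cover, for f identically 0, is given cost 0).\<close>
definition N1 :: "'x set \<Rightarrow> 'y set \<Rightarrow> ('x \<Rightarrow> 'y \<Rightarrow> bool) \<Rightarrow> real" where
  "N1 X Y f = (if C1 X Y f = 0 then 0 else log 2 (real (C1 X Y f)))"

definition finite_ordered_monoid ::
  "'m set \<Rightarrow> ('m \<Rightarrow> 'm \<Rightarrow> 'm) \<Rightarrow> 'm \<Rightarrow> ('m \<Rightarrow> 'm \<Rightarrow> bool) \<Rightarrow> bool" where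
  "finite_ordered_monoid M mult e le \<longleftrightarrow>
     finite M \<and> e \<in> M \<and> (\<forall>x\<in>M. \<forall>y\<in>M. mult x y \<in> M) \<and>
     (\<forall>x\<in>M. \<forall>y\<in>M. \<forall>z\<in>M. mult (mult x y) z = mult x (mult y z)) \<and>
     (\<forall>x\<in>M. mult e x = x \<and> mult x e = x) \<and>
     (\<forall>x\<in>M. le x x) \<and>
     (\<forall>x\<in>M. \<forall>y\<in>M. le x y \<and> le y x \<longrightarrow> x = y) \<and>
     (\<forall>x\<in>M. \<forall>y\<in>M. \<forall>z\<in>M. le x y \<and> le y z \<longrightarrow> le x z) \<and>
     (\<forall>x\<in>M. \<forall>y\<in>M. \<forall>z\<in>M. le x y \<longrightarrow> le (mult z x) (mult z y) \<and> le (mult x z) (mult y z))"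

definition order_ideal :: "'m set \<Rightarrow> ('m \<Rightarrow> 'm \<Rightarrow> bool) \<Rightarrow> 'm set \<Rightarrow> bool" where
  "order_ideal M le I \<longleftrightarrow> I \<subseteq> M \<and> (\<forall>y\<in>I. \<forall>x\<in>M. le x y \<longrightarrow> x \<in> I)"

definition interleave :: "'m list \<Rightarrow> 'm list \<Rightarrow> 'm list" where
  "interleave xs ys = concat (map (\<lambda>(a,b). [a,b]) (zip xs ys))"

definition mprod :: "('m \<Rightarrow> 'm \<Rightarrow> 'm) \<Rightarrow> 'm \<Rightarrow> 'm list \<Rightarrow> 'm" where
  "mprod mult e ms = foldr mult ms e"

definition inputs :: "nat \<Rightarrow> 'a set \<Rightarrow> 'a list set" where
  "inputs n A = {xs. length xs = n \<and> set xs \<subseteq> A}"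

definition N1_monoid_ideal ::
  "'m set \<Rightarrow> ('m \<Rightarrow> 'm \<Rightarrow> 'm) \<Rightarrow> 'm \<Rightarrow> 'm set \<Rightarrow> nat \<Rightarrow> real" where
  "N1_monoid_ideal M mult e I n =
     N1 (inputs n M) (inputs n M) (\<lambda>xs ys. mprod mult e (interleave xs ys) \<in> I)"

definition N1_monoid ::
  "'m set \<Rightarrow> ('m \<Rightarrow> 'm \<Rightarrow> 'm) \<Rightarrow> 'm \<Rightarrow> ('m \<Rightarrow> 'm \<Rightarrow> bool) \<Rightarrow> nat \<Rightarrow> real" where
  "N1_monoid M mult e le n =
     Max ((\<lambda>I. N1_monoid_ideal M mult e I n) ` {I. order_ideal M le I})"

text \<open>Letters are Some a, the empty word epsilon is None.\<close>
definition opt_word :: "'a option \<Rightarrow> 'a list" where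
  "opt_word a = (case a of None \<Rightarrow> [] | Some x \<Rightarrow> [x])"

definition N1_lang :: "'a set \<Rightarrow> 'a list set \<Rightarrow> nat \<Rightarrow> real" where
  "N1_lang \<Sigma> L n =
     N1 (inputs n (insert None (Some ` \<Sigma>))) (inputs n (insert None (Some ` \<Sigma>)))
        (\<lambda>xs ys. concat (map opt_word (interleave xs ys)) \<in> L)"

definition regular :: "'a set \<Rightarrow> 'a list set \<Rightarrow> bool" where
  "regular \<Sigma> L \<longleftrightarrow> (\<exists>(Q::nat set) q0 \<delta> F.
      finite Q \<and> q0 \<in> Q \<and> F \<subseteq> Q \<and> (\<forall>q\<in>Q. \<forall>a\<in>\<Sigma>. \<delta> q a \<in> Q) \<and>
      L = {w \<in> lists \<Sigma>. foldl \<delta> q0 w \<in> F})"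

definition synt_le :: "'a set \<Rightarrow> 'a list set \<Rightarrow> 'a list \<Rightarrow> 'a list \<Rightarrow> bool" where
  "synt_le \<Sigma> L x y \<longleftrightarrow> (\<forall>u\<in>lists \<Sigma>. \<forall>v\<in>lists \<Sigma>. u @ y @ v \<in> L \<longrightarrow> u @ x @ v \<in> L)"

definition synt_class :: "'a set \<Rightarrow> 'a list set \<Rightarrow> 'a list \<Rightarrow> 'a list set" where
  "synt_class \<Sigma> L x = {y \<in> lists \<Sigma>. synt_le \<Sigma> L x y \<and> synt_le \<Sigma> L y x}"

text \<open>M(L) = Sigma^*/equiv_L, elements are the equivalence classes.\<close>
definition synt_monoid :: "'a set \<Rightarrow> 'a list set \<Rightarrow> 'a list set set" where
  "synt_monoid \<Sigma> L = synt_class \<Sigma> L ` lists \<Sigma>"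

definition synt_mult :: "'a set \<Rightarrow> 'a list set \<Rightarrow> 'a list set \<Rightarrow> 'a list set \<Rightarrow> 'a list set" where
  "synt_mult \<Sigma> L A B = synt_class \<Sigma> L ((SOME x. x \<in> A) @ (SOME y. y \<in> B))"

definition synt_unit :: "'a set \<Rightarrow> 'a list set \<Rightarrow> 'a list set" where
  "synt_unit \<Sigma> L = synt_class \<Sigma> L []"

definition synt_order :: "'a set \<Rightarrow> 'a list set \<Rightarrow> 'a list set \<Rightarrow> 'a list set \<Rightarrow> bool" where
  "synt_order \<Sigma> L A B \<longleftrightarrow> synt_le \<Sigma> L (SOME x. x \<in> A) (SOME y. y \<in> B)"

end

theory Submission
  imports Defs "HOL-Library.FuncSet"
begin

(* Mapping every input letter a to the class [a] reduces the L-problem to the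
   M-problem for the order ideal [L] = {[w] | w in L}; rectangle covers pull back along such
   reductions, hence N^1(L) <= N^1(M).

   Every element m of the finite monoid M has a representative word of length
   at most K, and [x] <= m holds iff u x v is in L for the finitely many tests (u,v) of m.
   Cutting both inputs into b = 8K chunks of length s = n div 4K, membership of the product
   in an ideal I becomes "some sequence of b monoid elements with product in I passes all of
   its tests on the chunks", and every test is an instance of the L-problem of length n
   (a monoid element is spelled out by its representative in a block of 2K positions).
   Covers of disjunctions add and of conjunctions multiply, so N^1(M,I) <= c + C * N^1(L).

   If N^1(L) vanishes identically, the L-problem is a rectangle at every
   length; then L is closed under concatenation and factors, the syntactic order is just
   the membership order, and every M-problem is a rectangle too. *)

section \<open>Rectangle covers\<close>

lemma one_coverI:
  assumes "\<And>S T. (S,T) \<in> set Rs \<Longrightarrow> S \<subseteq> X \<and> T \<subseteq> Y \<and> (\<forall>x\<in>S. \<forall>y\<in>T. f x y)"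
    and "\<And>x y. x \<in> X \<Longrightarrow> y \<in> Y \<Longrightarrow> f x y \<Longrightarrow> \<exists>(S,T)\<in>set Rs. x \<in> S \<and> y \<in> T"
  shows "one_cover X Y f Rs"
  unfolding one_cover_def
proof (intro conjI equalityI subsetI)
  show "\<forall>(S,T)\<in>set Rs. S \<subseteq> X \<and> T \<subseteq> Y \<and> (\<forall>x\<in>S. \<forall>y\<in>T. f x y)"
    using assms(1) by blast
  fix p
  show "p \<in> {(x,y). x \<in> X \<and> y \<in> Y \<and> f x y}" if p: "p \<in> (\<Union>(S,T)\<in>set Rs. S \<times> T)"
  proof -
    obtain S T where "(S,T) \<in> set Rs" "p \<in> S \<times> T" using p by blast
    then show ?thesis using assms(1)[of S T] by blast
  qed
  show "p \<in> (\<Union>(S,T)\<in>set Rs. S \<times> T)" if p: "p \<in> {(x,y). x \<in> X \<and> y \<in> Y \<and> f x y}"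
  proof -
    obtain x y where "p = (x,y)" "x \<in> X" "y \<in> Y" "f x y" using p by blast
    then show ?thesis using assms(2)[of x y] by blast
  qed
qed

lemma one_cover_rect:
  assumes "one_cover X Y f Rs" "(S,T) \<in> set Rs"
  shows "S \<subseteq> X \<and> T \<subseteq> Y \<and> (\<forall>x\<in>S. \<forall>y\<in>T. f x y)"
proof -
  have "\<forall>p\<in>set Rs. case p of (S,T) \<Rightarrow> S \<subseteq> X \<and> T \<subseteq> Y \<and> (\<forall>x\<in>S. \<forall>y\<in>T. f x y)"
    using assms(1) unfolding one_cover_def by (rule conjunct1)
  then show ?thesis using assms(2) by fastforce
qed

lemma one_cover_covers:
  assumes "one_cover X Y f Rs" "x \<in> X" "y \<in> Y" "f x y"
  shows "\<exists>(S,T)\<in>set Rs. x \<in> S \<and> y \<in> T"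
proof -
  have "(x,y) \<in> (\<Union>(S,T)\<in>set Rs. S \<times> T)" using assms unfolding one_cover_def by blast
  then show ?thesis by blast
qed

lemma C1_le_length: "one_cover X Y f Rs \<Longrightarrow> C1 X Y f \<le> length Rs"
  unfolding C1_def by (rule Least_le) auto

text \<open>On finite domains the singleton rectangles form a cover, so the minimum is attained.\<close>

lemma C1_attained:
  assumes "finite X" "finite Y"
  obtains Rs where "length Rs = C1 X Y f" "one_cover X Y f Rs"
proof -
  have "finite {(x,y). x \<in> X \<and> y \<in> Y \<and> f x y}"
    by (rule finite_subset[OF _ finite_cartesian_product[OF assms]]) auto
  then obtain l where l: "set l = {(x,y). x \<in> X \<and> y \<in> Y \<and> f x y}"
    using finite_list by blast
  have "one_cover X Y f (map (\<lambda>(x,y). ({x},{y})) l)"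
    by (rule one_coverI) (use l in auto)
  then have "\<exists>k Rs. length Rs = k \<and> one_cover X Y f Rs" by blast
  then have "\<exists>Rs. length Rs = C1 X Y f \<and> one_cover X Y f Rs"
    unfolding C1_def by (rule LeastI_ex)
  then show ?thesis using that by blast
qed

lemma C1_cong:
  assumes "\<And>x y. x \<in> X \<Longrightarrow> y \<in> Y \<Longrightarrow> f x y = g x y"
  shows "C1 X Y f = C1 X Y g"
proof -
  have "one_cover X Y f Rs = one_cover X Y g Rs" for Rs
    unfolding one_cover_def using assms by (auto 0 3 simp: subset_iff)
  then show ?thesis unfolding C1_def by simp
qed

text \<open>Covers of a disjunction are obtained by concatenation, so cover numbers add.\<close>

lemma C1_disj:
  assumes "finite X" "finite Y"
  shows "C1 X Y (\<lambda>x y. f x y \<or> g x y) \<le> C1 X Y f + C1 X Y g"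
proof -
  obtain R1 where R1: "length R1 = C1 X Y f" "one_cover X Y f R1" using C1_attained[OF assms] .
  obtain R2 where R2: "length R2 = C1 X Y g" "one_cover X Y g R2" using C1_attained[OF assms] .
  have "one_cover X Y (\<lambda>x y. f x y \<or> g x y) (R1 @ R2)"
  proof (rule one_coverI)
    fix S T assume "(S,T) \<in> set (R1 @ R2)"
    then show "S \<subseteq> X \<and> T \<subseteq> Y \<and> (\<forall>x\<in>S. \<forall>y\<in>T. f x y \<or> g x y)"
      using one_cover_rect[OF R1(2), of S T] one_cover_rect[OF R2(2), of S T] by auto
  next
    fix x y assume "x \<in> X" "y \<in> Y" "f x y \<or> g x y"
    then show "\<exists>(S,T)\<in>set (R1 @ R2). x \<in> S \<and> y \<in> T"
      using one_cover_covers[OF R1(2), of x y] one_cover_covers[OF R2(2), of x y] by auto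
  qed
  from C1_le_length[OF this] R1 R2 show ?thesis by simp
qed

lemma C1_Bex:
  assumes "finite X" "finite Y" "finite J"
  shows "C1 X Y (\<lambda>x y. \<exists>i\<in>J. f i x y) \<le> (\<Sum>i\<in>J. C1 X Y (f i))"
  using assms(3)
proof (induction J rule: finite_induct)
  case empty
  have "one_cover X Y (\<lambda>x y. \<exists>i\<in>{}. f i x y) []" by (rule one_coverI) auto
  then show ?case using C1_le_length by fastforce
next
  case (insert a J)
  have "C1 X Y (\<lambda>x y. \<exists>i\<in>insert a J. f i x y) = C1 X Y (\<lambda>x y. f a x y \<or> (\<exists>i\<in>J. f i x y))"
    by (rule C1_cong) auto
  also have "\<dots> \<le> C1 X Y (f a) + C1 X Y (\<lambda>x y. \<exists>i\<in>J. f i x y)" by (rule C1_disj[OF assms(1,2)])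
  also have "\<dots> \<le> C1 X Y (f a) + (\<Sum>i\<in>J. C1 X Y (f i))" using insert.IH by simp
  finally show ?case using insert.hyps by simp
qed

text \<open>Covers of a conjunction are obtained by intersecting rectangles pairwise, so cover
  numbers multiply.\<close>

lemma C1_conj:
  assumes "finite X" "finite Y"
  shows "C1 X Y (\<lambda>x y. f x y \<and> g x y) \<le> C1 X Y f * C1 X Y g"
proof -
  obtain R1 where R1: "length R1 = C1 X Y f" "one_cover X Y f R1" using C1_attained[OF assms] .
  obtain R2 where R2: "length R2 = C1 X Y g" "one_cover X Y g R2" using C1_attained[OF assms] .
  define R where "R = concat (map (\<lambda>(S,T). map (\<lambda>(S',T'). (S \<inter> S', T \<inter> T')) R2) R1)"
  have len: "length R = length R1 * length R2"
    unfolding R_def by (induction R1) (auto simp: length_concat)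
  have "one_cover X Y (\<lambda>x y. f x y \<and> g x y) R"
  proof (rule one_coverI)
    fix S T assume "(S,T) \<in> set R"
    then obtain S1 T1 S2 T2 where "(S1,T1) \<in> set R1" "(S2,T2) \<in> set R2"
      and "S = S1 \<inter> S2" "T = T1 \<inter> T2"
      unfolding R_def by (auto split: prod.splits)
    then show "S \<subseteq> X \<and> T \<subseteq> Y \<and> (\<forall>x\<in>S. \<forall>y\<in>T. f x y \<and> g x y)"
      using one_cover_rect[OF R1(2), of S1 T1] one_cover_rect[OF R2(2), of S2 T2] by blast
  next
    fix x y assume "x \<in> X" "y \<in> Y" "f x y \<and> g x y"
    then obtain S1 T1 S2 T2 where "(S1,T1) \<in> set R1" "(S2,T2) \<in> set R2"
      and "x \<in> S1" "y \<in> T1" "x \<in> S2" "y \<in> T2"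
      using one_cover_covers[OF R1(2), of x y] one_cover_covers[OF R2(2), of x y] by auto
    then show "\<exists>(S,T)\<in>set R. x \<in> S \<and> y \<in> T" unfolding R_def by force
  qed
  from C1_le_length[OF this] len R1 R2 show ?thesis by simp
qed

lemma C1_Ball:
  assumes "finite X" "finite Y" "finite J"
  shows "C1 X Y (\<lambda>x y. \<forall>i\<in>J. f i x y) \<le> (\<Prod>i\<in>J. C1 X Y (f i))"
  using assms(3)
proof (induction J rule: finite_induct)
  case empty
  have "one_cover X Y (\<lambda>x y. \<forall>i\<in>{}. f i x y) [(X,Y)]" by (rule one_coverI) auto
  then show ?case using C1_le_length by fastforce
next
  case (insert a J)
  have "C1 X Y (\<lambda>x y. \<forall>i\<in>insert a J. f i x y) = C1 X Y (\<lambda>x y. f a x y \<and> (\<forall>i\<in>J. f i x y))"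
    by (rule C1_cong) auto
  also have "\<dots> \<le> C1 X Y (f a) * C1 X Y (\<lambda>x y. \<forall>i\<in>J. f i x y)" by (rule C1_conj[OF assms(1,2)])
  also have "\<dots> \<le> C1 X Y (f a) * (\<Prod>i\<in>J. C1 X Y (f i))" using insert.IH by simp
  finally show ?case using insert.hyps by simp
qed

lemma C1_pullback:
  assumes "finite X'" "finite Y'" "\<And>x. x \<in> X \<Longrightarrow> \<alpha> x \<in> X'" "\<And>y. y \<in> Y \<Longrightarrow> \<beta> y \<in> Y'"
  shows "C1 X Y (\<lambda>x y. f (\<alpha> x) (\<beta> y)) \<le> C1 X' Y' f"
proof -
  obtain R where R: "length R = C1 X' Y' f" "one_cover X' Y' f R" using C1_attained[OF assms(1,2)] .
  let ?R = "map (\<lambda>(S,T). ({x\<in>X. \<alpha> x \<in> S}, {y\<in>Y. \<beta> y \<in> T})) R"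
  have "one_cover X Y (\<lambda>x y. f (\<alpha> x) (\<beta> y)) ?R"
  proof (rule one_coverI)
    fix S T assume "(S,T) \<in> set ?R"
    then obtain S0 T0 where "(S0,T0) \<in> set R" "S = {x\<in>X. \<alpha> x \<in> S0}" "T = {y\<in>Y. \<beta> y \<in> T0}"
      by auto
    then show "S \<subseteq> X \<and> T \<subseteq> Y \<and> (\<forall>x\<in>S. \<forall>y\<in>T. f (\<alpha> x) (\<beta> y))"
      using one_cover_rect[OF R(2), of S0 T0] by auto
  next
    fix x y assume "x \<in> X" "y \<in> Y" "f (\<alpha> x) (\<beta> y)"
    then obtain S T where "(S,T) \<in> set R" "\<alpha> x \<in> S" "\<beta> y \<in> T"
      using one_cover_covers[OF R(2), of "\<alpha> x" "\<beta> y"] assms(3,4) by auto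
    then show "\<exists>(S,T)\<in>set ?R. x \<in> S \<and> y \<in> T" using \<open>x \<in> X\<close> \<open>y \<in> Y\<close> by force
  qed
  from C1_le_length[OF this] R show ?thesis by simp
qed

lemma C1_le_1_exchange:
  assumes "finite X" "finite Y" "C1 X Y f \<le> 1"
    and "x1 \<in> X" "y1 \<in> Y" "f x1 y1" "x2 \<in> X" "y2 \<in> Y" "f x2 y2"
  shows "f x1 y2"
proof -
  obtain R where R: "length R = C1 X Y f" "one_cover X Y f R" using C1_attained[OF assms(1,2)] .
  obtain S T where ST: "(S,T) \<in> set R" "x1 \<in> S" "y1 \<in> T"
    using one_cover_covers[OF R(2), of x1 y1] assms by auto
  obtain S' T' where ST': "(S',T') \<in> set R" "x2 \<in> S'" "y2 \<in> T'"
    using one_cover_covers[OF R(2), of x2 y2] assms by auto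
  have "length R \<le> 1" using R assms(3) by simp
  with ST ST' have "(S,T) = (S',T')" by (cases R) auto
  with ST ST' one_cover_rect[OF R(2), of S T] show ?thesis by auto
qed

lemma exchange_C1_le_1:
  assumes "\<And>x1 y1 x2 y2. x1 \<in> X \<Longrightarrow> y1 \<in> Y \<Longrightarrow> f x1 y1 \<Longrightarrow> x2 \<in> X \<Longrightarrow> y2 \<in> Y \<Longrightarrow> f x2 y2
      \<Longrightarrow> f x1 y2"
  shows "C1 X Y f \<le> 1"
proof -
  let ?S = "{x\<in>X. \<exists>y\<in>Y. f x y}" and ?T = "{y\<in>Y. \<exists>x\<in>X. f x y}"
  have "one_cover X Y f [(?S,?T)]"
  proof (rule one_coverI)
    fix S T assume "(S,T) \<in> set [(?S,?T)]"
    then show "S \<subseteq> X \<and> T \<subseteq> Y \<and> (\<forall>x\<in>S. \<forall>y\<in>T. f x y)"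
      using assms by auto
  qed auto
  from C1_le_length[OF this] show ?thesis by simp
qed

lemma N1_via_C1: "N1 X Y f = log 2 (max 1 (real (C1 X Y f)))"
  unfolding N1_def by (cases "C1 X Y f") auto

lemma N1_mono: "C1 X Y f \<le> C1 X' Y' g \<Longrightarrow> N1 X Y f \<le> N1 X' Y' g"
  unfolding N1_via_C1 by simp

lemma N1_ge_1: "C1 X Y f \<ge> 2 \<Longrightarrow> N1 X Y f \<ge> 1"
  unfolding N1_via_C1 by simp

lemma N1_eq_0_iff: "N1 X Y f = 0 \<longleftrightarrow> C1 X Y f \<le> 1"
proof
  assume "N1 X Y f = 0"
  then show "C1 X Y f \<le> 1" using N1_ge_1[of X Y f] by linarith
next
  assume "C1 X Y f \<le> 1"
  then have "max 1 (real (C1 X Y f)) = 1" by simp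
  then show "N1 X Y f = 0" unfolding N1_via_C1 by simp
qed

lemma N1_0_or_ge_1: "N1 X Y f = 0 \<or> N1 X Y f \<ge> 1"
proof (cases "C1 X Y f \<le> 1")
  case False
  then show ?thesis using N1_ge_1[of X Y f] by simp
qed (simp add: N1_eq_0_iff)

lemma N1_nonneg: "N1 X Y f \<ge> 0"
  using N1_0_or_ge_1[of X Y f] by linarith

lemma N1_le_log:
  assumes "real (C1 X Y f) \<le> c" "1 \<le> c"
  shows "N1 X Y f \<le> log 2 c"
  using assms unfolding N1_via_C1 by simp

section \<open>Words spelled by interleaved inputs\<close>

lemma interleave_Nil [simp]: "interleave [] ys = []" "interleave xs [] = []"
  unfolding interleave_def by auto

lemma interleave_Cons [simp]: "interleave (x#xs) (y#ys) = x # y # interleave xs ys"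
  unfolding interleave_def by simp

lemma interleave_append:
  "length xs1 = length ys1 \<Longrightarrow>
     interleave (xs1 @ xs2) (ys1 @ ys2) = interleave xs1 ys1 @ interleave xs2 ys2"
  unfolding interleave_def by simp

lemma set_interleave_subset: "set (interleave xs ys) \<subseteq> set xs \<union> set ys"
proof (induction xs arbitrary: ys)
  case (Cons x xs) then show ?case by (cases ys) auto
qed simp

lemma set_interleave: "length xs = length ys \<Longrightarrow> set (interleave xs ys) = set xs \<union> set ys"
proof (induction xs arbitrary: ys)
  case (Cons x xs) then show ?case by (cases ys) auto
qed simp

lemma map_interleave: "map f (interleave xs ys) = interleave (map f xs) (map f ys)"
proof (induction xs arbitrary: ys)
  case (Cons x xs) then show ?case by (cases ys) auto
qed simp

lemma concat_lists: "set Ws \<subseteq> lists A \<Longrightarrow> concat Ws \<in> lists A"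
  by (induction Ws) auto

lemma concat_map_concat: "concat (map f (concat Zs)) = concat (map (\<lambda>Z. concat (map f Z)) Zs)"
  by (induction Zs) auto

lemma finite_inputs: "finite A \<Longrightarrow> finite (inputs n A)"
  unfolding inputs_def using finite_lists_length_eq[of A n] by (simp add: conj_commute)

text \<open>The word over the alphabet spelled by Alice's and Bob's inputs, read alternately;
  the letter None stands for the empty word.  This is exactly the word tested in N1_lang.\<close>

definition word_of :: "'a option list \<Rightarrow> 'a option list \<Rightarrow> 'a list" where
  "word_of xs ys = concat (map opt_word (interleave xs ys))"

lemma word_of_append:
  "length xs1 = length ys1 \<Longrightarrow> word_of (xs1 @ xs2) (ys1 @ ys2) = word_of xs1 ys1 @ word_of xs2 ys2"
  unfolding word_of_def by (simp add: interleave_append)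

lemma word_of_Some_None: "word_of (map Some w) (replicate (length w) None) = w"
  by (induction w) (auto simp: word_of_def opt_word_def)

lemma word_of_None_Some: "word_of (replicate (length w) None) (map Some w) = w"
  by (induction w) (auto simp: word_of_def opt_word_def)

lemma word_of_None_None: "word_of (replicate k None) (replicate k None) = []"
  by (induction k) (auto simp: word_of_def opt_word_def)

definition pad :: "nat \<Rightarrow> 'a option list \<Rightarrow> 'a option list" where
  "pad n xs = xs @ replicate (n - length xs) None"

lemma word_of_pad: "length xs = length ys \<Longrightarrow> word_of (pad n xs) (pad n ys) = word_of xs ys"
  unfolding pad_def by (simp add: word_of_append word_of_None_None)

lemma pad_in_inputs:
  "set xs \<subseteq> A \<Longrightarrow> None \<in> A \<Longrightarrow> length xs \<le> n \<Longrightarrow> pad n xs \<in> inputs n A"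
  unfolding pad_def inputs_def by auto

text \<open>A pair of words of length at most K is spelled by a pair of blocks of length 2K:
  Alice writes the first word while Bob is silent, then Bob writes the second.\<close>

definition alice_block :: "nat \<Rightarrow> 'a list \<Rightarrow> 'a option list" where
  "alice_block K w = map Some w @ replicate (K - length w) None @ replicate K None"

definition bob_block :: "nat \<Rightarrow> 'a list \<Rightarrow> 'a option list" where
  "bob_block K w = replicate K None @ map Some w @ replicate (K - length w) None"

lemma length_alice_block: "length w \<le> K \<Longrightarrow> length (alice_block K w) = 2*K"
  unfolding alice_block_def by simp

lemma length_bob_block: "length w \<le> K \<Longrightarrow> length (bob_block K w) = 2*K"
  unfolding bob_block_def by simp

lemma word_of_blocks:
  assumes "length w \<le> K" "length w' \<le> K"
  shows "word_of (alice_block K w) (bob_block K w') = w @ w'"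
proof -
  have split: "replicate K None = replicate (length x) None @ replicate (K - length x) None"
    if "length x \<le> K" for x :: "'a list"
    using that by (simp add: replicate_add[symmetric])
  have first: "word_of (map Some w @ replicate (K - length w) None) (replicate K None) = w"
    by (subst split[OF assms(1)]) (simp add: word_of_append word_of_Some_None word_of_None_None)
  have second: "word_of (replicate K None) (map Some w' @ replicate (K - length w') None) = w'"
    by (subst split[OF assms(2)]) (simp add: word_of_append word_of_None_Some word_of_None_None)
  have "word_of (alice_block K w) (bob_block K w')
      = word_of (map Some w @ replicate (K - length w) None) (replicate K None)
        @ word_of (replicate K None) (map Some w' @ replicate (K - length w') None)"
    unfolding alice_block_def bob_block_def using assms(1)
    by (subst append_assoc[symmetric], subst word_of_append) auto
  then show ?thesis using first second by simp
qed

definition alice_enc :: "nat \<Rightarrow> 'a list list \<Rightarrow> 'a option list" where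
  "alice_enc K ws = concat (map (alice_block K) ws)"

definition bob_enc :: "nat \<Rightarrow> 'a list list \<Rightarrow> 'a option list" where
  "bob_enc K ws = concat (map (bob_block K) ws)"

lemma length_alice_enc: "\<forall>w\<in>set ws. length w \<le> K \<Longrightarrow> length (alice_enc K ws) = 2*K*length ws"
  unfolding alice_enc_def by (induction ws) (auto simp: length_alice_block)

lemma length_bob_enc: "\<forall>w\<in>set ws. length w \<le> K \<Longrightarrow> length (bob_enc K ws) = 2*K*length ws"
  unfolding bob_enc_def by (induction ws) (auto simp: length_bob_block)

lemma word_of_enc:
  assumes "length ws = length ws'" "\<forall>w\<in>set ws \<union> set ws'. length w \<le> K"
  shows "word_of (alice_enc K ws) (bob_enc K ws') = concat (interleave ws ws')"
  using assms
proof (induction ws arbitrary: ws')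
  case (Cons w ws)
  then obtain w' ws'' where ws': "ws' = w' # ws''" by (cases ws') auto
  have "word_of (alice_enc K (w # ws)) (bob_enc K ws')
      = word_of (alice_block K w) (bob_block K w') @ word_of (alice_enc K ws) (bob_enc K ws'')"
    unfolding alice_enc_def bob_enc_def ws' using Cons.prems ws'
    by (simp add: word_of_append length_alice_block length_bob_block)
  then show ?case using Cons ws' by (simp add: word_of_blocks)
qed (simp add: alice_enc_def bob_enc_def word_of_def)

text \<open>An instance of the language problem of length n testing u @ (interleaved words) @ v:
  the fixed context words u and v are written by Alice.\<close>

definition alice_inst :: "nat \<Rightarrow> nat \<Rightarrow> 'a list \<Rightarrow> 'a list \<Rightarrow> 'a list list \<Rightarrow> 'a option list" where
  "alice_inst n K u v ws = pad n (map Some u @ alice_enc K ws @ map Some v)"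

definition bob_inst :: "nat \<Rightarrow> nat \<Rightarrow> 'a list \<Rightarrow> 'a list \<Rightarrow> 'a list list \<Rightarrow> 'a option list" where
  "bob_inst n K u v ws = pad n (replicate (length u) None @ bob_enc K ws @ replicate (length v) None)"

lemma word_of_inst:
  assumes "length ws = length ws'" "\<forall>w\<in>set ws \<union> set ws'. length w \<le> K"
  shows "word_of (alice_inst n K u v ws) (bob_inst n K u v ws') = u @ concat (interleave ws ws') @ v"
proof -
  have "length (alice_enc K ws) = length (bob_enc K ws')"
    using assms by (simp add: length_alice_enc length_bob_enc)
  then show ?thesis
    unfolding alice_inst_def bob_inst_def
    by (simp add: word_of_pad word_of_append word_of_Some_None word_of_enc[OF assms])
qed

lemma inst_in_inputs:
  assumes "u \<in> lists \<Sigma>" "v \<in> lists \<Sigma>" "set ws \<subseteq> lists \<Sigma>" "\<forall>w\<in>set ws. length w \<le> K"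
    and "length u + 2*K*length ws + length v \<le> n"
  shows "alice_inst n K u v ws \<in> inputs n (insert None (Some ` \<Sigma>))"
    and "bob_inst n K u v ws \<in> inputs n (insert None (Some ` \<Sigma>))"
proof -
  have "set (alice_block K w) \<subseteq> insert None (Some ` \<Sigma>)"
    and "set (bob_block K w) \<subseteq> insert None (Some ` \<Sigma>)" if "w \<in> lists \<Sigma>" for w
    using that unfolding alice_block_def bob_block_def by auto
  then have "set (alice_enc K ws) \<subseteq> insert None (Some ` \<Sigma>)"
    and "set (bob_enc K ws) \<subseteq> insert None (Some ` \<Sigma>)"
    using assms(3) unfolding alice_enc_def bob_enc_def by fastforce+
  then show "alice_inst n K u v ws \<in> inputs n (insert None (Some ` \<Sigma>))"
    and "bob_inst n K u v ws \<in> inputs n (insert None (Some ` \<Sigma>))"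
    unfolding alice_inst_def bob_inst_def using assms
    by (auto intro!: pad_in_inputs simp: length_alice_enc length_bob_enc)
qed

definition chunk :: "nat \<Rightarrow> nat \<Rightarrow> 'm list \<Rightarrow> 'm list" where
  "chunk s j xs = take s (drop (j*s) xs)"

lemma length_chunk_le: "length (chunk s j xs) \<le> s"
  unfolding chunk_def by simp

lemma length_chunk_eq: "length xs = length ys \<Longrightarrow> length (chunk s j xs) = length (chunk s j ys)"
  unfolding chunk_def by simp

lemma set_chunk_subset: "set (chunk s j xs) \<subseteq> set xs"
  unfolding chunk_def by (meson in_set_dropD in_set_takeD subsetI)

lemma interleave_chunks:
  assumes "length xs = length ys" "length xs \<le> b*s"
  shows "interleave xs ys = concat (map (\<lambda>j. interleave (chunk s j xs) (chunk s j ys)) [0..<b])"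
proof -
  have "interleave (take (b'*s) xs) (take (b'*s) ys)
      = concat (map (\<lambda>j. interleave (chunk s j xs) (chunk s j ys)) [0..<b'])" for b'
  proof (induction b')
    case (Suc b')
    have "take (Suc b' * s) zs = take (b'*s) zs @ chunk s b' zs" for zs :: "'a list"
      unfolding chunk_def mult_Suc add.commute[of s] by (rule take_add)
    then show ?case using Suc assms(1) by (simp add: interleave_append)
  qed simp
  then show ?thesis using assms by (metis take_all_iff)
qed

section \<open>The syntactic ordered monoid\<close>

lemma foldl_closed:
  assumes "\<forall>q\<in>Q. \<forall>a\<in>\<Sigma>. \<delta> q a \<in> Q"
  shows "q \<in> Q \<Longrightarrow> w \<in> lists \<Sigma> \<Longrightarrow> foldl \<delta> q w \<in> Q"
  by (induction w arbitrary: q) (use assms in auto)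

locale syntactic =
  fixes \<Sigma> :: "'a set" and L :: "'a list set"
  assumes L_words: "L \<subseteq> lists \<Sigma>"
begin

abbreviation "le \<equiv> synt_le \<Sigma> L"
abbreviation "cls \<equiv> synt_class \<Sigma> L"
abbreviation "M \<equiv> synt_monoid \<Sigma> L"
abbreviation "mult \<equiv> synt_mult \<Sigma> L"
abbreviation "e \<equiv> synt_unit \<Sigma> L"
abbreviation "ord \<equiv> synt_order \<Sigma> L"

lemma le_refl: "le x x"
  unfolding synt_le_def by blast

lemma le_trans: "le x y \<Longrightarrow> le y z \<Longrightarrow> le x z"
  unfolding synt_le_def by blast

text \<open>L is downward closed for the syntactic preorder (take the empty context).\<close>

lemma L_downward: "y \<in> L \<Longrightarrow> le x y \<Longrightarrow> x \<in> lists \<Sigma> \<Longrightarrow> x \<in> L"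
  unfolding synt_le_def by (metis append.left_neutral append.right_neutral lists.Nil)

lemma le_context:
  assumes "le x y" "a \<in> lists \<Sigma>" "b \<in> lists \<Sigma>"
  shows "le (a @ x @ b) (a @ y @ b)"
  unfolding synt_le_def
proof (intro ballI impI)
  fix u v assume uv: "u \<in> lists \<Sigma>" "v \<in> lists \<Sigma>" "u @ (a @ y @ b) @ v \<in> L"
  have "(u @ a) @ y @ (b @ v) \<in> L" "u @ a \<in> lists \<Sigma>" "b @ v \<in> lists \<Sigma>"
    using uv assms(2,3) by auto
  then have "(u @ a) @ x @ (b @ v) \<in> L" using assms(1) unfolding synt_le_def by blast
  then show "u @ (a @ x @ b) @ v \<in> L" by simp
qed

lemma le_append:
  assumes "le x y" "le x' y'" "x \<in> lists \<Sigma>" "y' \<in> lists \<Sigma>"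
  shows "le (x @ x') (y @ y')"
proof -
  have "le (x @ x' @ []) (x @ y' @ [])" by (rule le_context) (use assms in auto)
  moreover have "le ([] @ x @ y') ([] @ y @ y')" by (rule le_context) (use assms in auto)
  ultimately show ?thesis by (auto intro: le_trans)
qed

lemma le_concat:
  assumes "list_all2 le Ws Vs" "set Ws \<subseteq> lists \<Sigma>" "set Vs \<subseteq> lists \<Sigma>"
  shows "le (concat Ws) (concat Vs)"
  using assms
proof (induction Ws Vs rule: list_all2_induct)
  case (Cons x xs y ys)
  then have "le (x @ concat xs) (y @ concat ys)"
    using concat_lists[of ys \<Sigma>] by (intro le_append) auto
  then show ?case by simp
qed (simp add: le_refl)

lemma in_cls: "x \<in> lists \<Sigma> \<Longrightarrow> x \<in> cls x"
  unfolding synt_class_def using le_refl by blast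

lemma cls_eq_iff:
  assumes "x \<in> lists \<Sigma>" "y \<in> lists \<Sigma>"
  shows "cls x = cls y \<longleftrightarrow> le x y \<and> le y x"
proof
  assume "cls x = cls y"
  then have "y \<in> cls x" using in_cls[OF assms(2)] by simp
  then show "le x y \<and> le y x" unfolding synt_class_def by auto
qed (auto simp: synt_class_def intro: le_trans)

lemma cls_in_M: "a \<in> lists \<Sigma> \<Longrightarrow> cls a \<in> M"
  unfolding synt_monoid_def by auto

lemma M_cases: "m \<in> M \<Longrightarrow> (\<And>a. a \<in> lists \<Sigma> \<Longrightarrow> m = cls a \<Longrightarrow> P) \<Longrightarrow> P"
  unfolding synt_monoid_def by auto

text \<open>The operations of the syntactic monoid are defined via arbitrary members of the
  classes; any member is equivalent to the word that generated the class.\<close>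

lemma some_in_cls:
  assumes "a \<in> lists \<Sigma>"
  shows "(SOME z. z \<in> cls a) \<in> lists \<Sigma>" "le (SOME z. z \<in> cls a) a" "le a (SOME z. z \<in> cls a)"
proof -
  have "(SOME z. z \<in> cls a) \<in> cls a" using in_cls[OF assms] by (rule someI)
  then show "(SOME z. z \<in> cls a) \<in> lists \<Sigma>" "le (SOME z. z \<in> cls a) a" "le a (SOME z. z \<in> cls a)"
    unfolding synt_class_def by auto
qed

lemma mult_cls:
  assumes "a \<in> lists \<Sigma>" "b \<in> lists \<Sigma>"
  shows "mult (cls a) (cls b) = cls (a @ b)"
proof -
  let ?x = "SOME z. z \<in> cls a" and ?y = "SOME z. z \<in> cls b"
  note x = some_in_cls[OF assms(1)] and y = some_in_cls[OF assms(2)]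
  have "le (?x @ ?y) (a @ b)" by (rule le_append) (use x y assms in auto)
  moreover have "le (a @ b) (?x @ ?y)" by (rule le_append) (use x y assms in auto)
  ultimately show ?thesis
    unfolding synt_mult_def using cls_eq_iff[of "?x @ ?y" "a @ b"] x y assms by simp
qed

lemma ord_cls:
  assumes "a \<in> lists \<Sigma>" "b \<in> lists \<Sigma>"
  shows "ord (cls a) (cls b) \<longleftrightarrow> le a b"
proof -
  note x = some_in_cls[OF assms(1)] and y = some_in_cls[OF assms(2)]
  show ?thesis unfolding synt_order_def
    using le_trans[OF x(3)] le_trans[OF _ y(3)] le_trans[OF x(2)] le_trans[OF _ y(2)] by blast
qed

lemma mprod_cls:
  "set Ws \<subseteq> lists \<Sigma> \<Longrightarrow> mprod mult e (map cls Ws) = cls (concat Ws)"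
proof (induction Ws)
  case Nil then show ?case by (simp add: mprod_def synt_unit_def)
next
  case (Cons w Ws)
  then have "mprod mult e (map cls (w # Ws)) = mult (cls w) (cls (concat Ws))"
    by (simp add: mprod_def)
  also have "\<dots> = cls (w @ concat Ws)"
    using Cons.prems concat_lists[of Ws \<Sigma>] by (intro mult_cls) auto
  finally show ?case by simp
qed

lemma ideal_downward:
  assumes "order_ideal M ord I" "cls v \<in> I" "le w v" "w \<in> lists \<Sigma>" "v \<in> lists \<Sigma>"
  shows "cls w \<in> I"
proof -
  have "ord (cls w) (cls v)" using ord_cls assms(3-5) by blast
  then show ?thesis using assms(1,2) cls_in_M[OF assms(4)] unfolding order_ideal_def by blast
qed

text \<open>A regular language has a finite syntactic monoid: words inducing the same state
  transformation of a finite automaton are syntactically equivalent.\<close>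

lemma finite_synt_monoid:
  assumes "regular \<Sigma> L"
  shows "finite M"
proof -
  obtain Q :: "nat set" and q0 \<delta> F
    where Q: "finite Q" "q0 \<in> Q" "\<forall>q\<in>Q. \<forall>a\<in>\<Sigma>. \<delta> q a \<in> Q"
      and L_eq: "L = {w \<in> lists \<Sigma>. foldl \<delta> q0 w \<in> F}"
    using assms unfolding regular_def by blast
  define tr :: "'a list \<Rightarrow> nat \<Rightarrow> nat" where "tr w = restrict (\<lambda>q. foldl \<delta> q w) Q" for w
  have same_tr_le: "le x y" if "x \<in> lists \<Sigma>" "tr x = tr y" for x y
    unfolding synt_le_def
  proof (intro ballI impI)
    fix u v assume uv: "u \<in> lists \<Sigma>" "v \<in> lists \<Sigma>" "u @ y @ v \<in> L"
    have "foldl \<delta> q0 u \<in> Q" using foldl_closed[OF Q(3) Q(2) uv(1)] .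
    then have "foldl \<delta> (foldl \<delta> q0 u) x = foldl \<delta> (foldl \<delta> q0 u) y"
      using fun_cong[OF that(2), of "foldl \<delta> q0 u"] unfolding tr_def by simp
    then show "u @ x @ v \<in> L" using uv that(1) unfolding L_eq by simp
  qed
  have "M \<subseteq> (\<lambda>t. cls (SOME w. w \<in> lists \<Sigma> \<and> tr w = t)) ` tr ` lists \<Sigma>"
  proof
    fix m assume "m \<in> M"
    then obtain a where a: "a \<in> lists \<Sigma>" "m = cls a" by (rule M_cases)
    let ?w = "SOME w. w \<in> lists \<Sigma> \<and> tr w = tr a"
    have "\<exists>w. w \<in> lists \<Sigma> \<and> tr w = tr a" using a by blast
    then have w: "?w \<in> lists \<Sigma>" "tr ?w = tr a" by (metis (mono_tags, lifting) someI_ex)+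
    then have "cls ?w = m" using a same_tr_le cls_eq_iff by metis
    then show "m \<in> (\<lambda>t. cls (SOME w. w \<in> lists \<Sigma> \<and> tr w = t)) ` tr ` lists \<Sigma>"
      using a by blast
  qed
  moreover have "tr ` lists \<Sigma> \<subseteq> Q \<rightarrow>\<^sub>E Q"
    using foldl_closed[OF Q(3)] unfolding tr_def by (auto simp: in_lists_conv_set)
  then have "finite (tr ` lists \<Sigma>)" by (rule finite_subset) (intro finite_PiE Q(1))
  ultimately show ?thesis using finite_subset by blast
qed

end

section \<open>Representatives and tests in a finite syntactic monoid\<close>

locale finite_syntactic = syntactic +
  assumes finite_alphabet: "finite \<Sigma>" and finite_M: "finite M"
begin

definition rep :: "'a list set \<Rightarrow> 'a list" where
  "rep m = (SOME w. w \<in> lists \<Sigma> \<and> cls w = m)"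

lemma rep_spec: assumes "m \<in> M" shows "rep m \<in> lists \<Sigma>" "cls (rep m) = m"
proof -
  obtain a where "a \<in> lists \<Sigma>" "m = cls a" using assms by (rule M_cases)
  then have "\<exists>w. w \<in> lists \<Sigma> \<and> cls w = m" by blast
  then have "rep m \<in> lists \<Sigma> \<and> cls (rep m) = m" unfolding rep_def by (rule someI_ex)
  then show "rep m \<in> lists \<Sigma>" "cls (rep m) = m" by auto
qed

lemma rep_cls: "w \<in> lists \<Sigma> \<Longrightarrow> le w (rep (cls w)) \<and> le (rep (cls w)) w"
  using rep_spec[OF cls_in_M] cls_eq_iff by metis

definition K :: nat where
  "K = max 1 (Max (length ` rep ` M))"

text \<open>K is at least 1, so that chunks of length n div 4K are nonempty for n \<ge> 8K.\<close>

lemma K_pos: "K \<ge> 1"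
  unfolding K_def by simp

lemma length_rep: "m \<in> M \<Longrightarrow> length (rep m) \<le> K"
proof -
  assume "m \<in> M"
  then have "length (rep m) \<le> Max (length ` rep ` M)" using finite_M by (intro Max_ge) auto
  then show ?thesis unfolding K_def by linarith
qed

lemma mprod_rep: "set ms \<subseteq> M \<Longrightarrow> mprod mult e ms = cls (concat (map rep ms))"
proof -
  assume ms: "set ms \<subseteq> M"
  then have "map cls (map rep ms) = ms" using rep_spec(2) by (induction ms) auto
  moreover have "set (map rep ms) \<subseteq> lists \<Sigma>" using ms rep_spec(1) by auto
  ultimately show ?thesis using mprod_cls[of "map rep ms"] by simp
qed

text \<open>The tests of m: pairs of representatives (u,v) such that u (rep m) v is in L.
  There are at most |M|^2 of them, and they decide the order below rep m.\<close>

definition tests :: "'a list set \<Rightarrow> ('a list \<times> 'a list) set" where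
  "tests m = (\<lambda>(a,b). (rep a, rep b)) ` {(a,b) \<in> M \<times> M. rep a @ rep m @ rep b \<in> L}"

lemma finite_test_pairs: "finite {(a,b) \<in> M \<times> M. rep a @ rep m @ rep b \<in> L}"
  by (rule finite_subset[of _ "M \<times> M"]) (use finite_M in auto)

lemma finite_tests: "finite (tests m)"
  unfolding tests_def using finite_test_pairs by (rule finite_imageI)

lemma card_tests: "card (tests m) \<le> card M * card M"
proof -
  have "card (tests m) \<le> card {(a,b) \<in> M \<times> M. rep a @ rep m @ rep b \<in> L}"
    unfolding tests_def using finite_test_pairs by (rule card_image_le)
  also have "\<dots> \<le> card (M \<times> M)" by (rule card_mono) (use finite_M in auto)
  finally show ?thesis by (simp add: card_cartesian_product)
qed

lemma tests_words:
  "(u,v) \<in> tests m \<Longrightarrow> u \<in> lists \<Sigma> \<and> v \<in> lists \<Sigma> \<and> length u \<le> K \<and> length v \<le> K"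
  unfolding tests_def using rep_spec length_rep by auto

lemma le_rep_iff_tests:
  assumes "m \<in> M" "x \<in> lists \<Sigma>"
  shows "le x (rep m) \<longleftrightarrow> (\<forall>(u,v)\<in>tests m. u @ x @ v \<in> L)"
proof
  assume "le x (rep m)"
  then show "\<forall>(u,v)\<in>tests m. u @ x @ v \<in> L"
    unfolding tests_def synt_le_def using rep_spec(1) by auto
next
  assume pass: "\<forall>(u,v)\<in>tests m. u @ x @ v \<in> L"
  show "le x (rep m)" unfolding synt_le_def
  proof (intro ballI impI)
    fix u v assume uv: "u \<in> lists \<Sigma>" "v \<in> lists \<Sigma>" "u @ rep m @ v \<in> L"
    let ?u = "rep (cls u)" and ?v = "rep (cls v)"
    have words: "?u \<in> lists \<Sigma>" "?v \<in> lists \<Sigma>" "rep m \<in> lists \<Sigma>"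
      using rep_spec(1) cls_in_M uv(1,2) assms(1) by auto
    have "le (?u @ rep m @ ?v) (u @ rep m @ v)"
      using words uv rep_cls by (intro le_append le_refl) auto
    then have "?u @ rep m @ ?v \<in> L" using uv(3) L_downward words by auto
    then have "(?u, ?v) \<in> tests m"
      unfolding tests_def using uv(1,2) cls_in_M by (auto intro!: image_eqI[of _ _ "(cls u, cls v)"])
    then have "?u @ x @ ?v \<in> L" using pass by auto
    moreover have "le (u @ x @ v) (?u @ x @ ?v)"
      using words uv assms(2) rep_cls by (intro le_append le_refl) auto
    ultimately show "u @ x @ v \<in> L" using L_downward uv assms(2) by auto
  qed
qed

text \<open>Membership of the class of a concatenation W_0 ... W_(b-1) in an ideal I is decided
  by guessing b monoid elements with product in I and running all their tests on the W_j.\<close>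

definition good_seqs :: "nat \<Rightarrow> 'a list set set \<Rightarrow> 'a list set list set" where
  "good_seqs b I = {ms \<in> inputs b M. mprod mult e ms \<in> I}"

lemma finite_good_seqs: "finite (good_seqs b I)"
  unfolding good_seqs_def using finite_inputs[OF finite_M, of b] by simp

lemma ideal_iff_tests:
  assumes I: "order_ideal M ord I" and Ws: "set Ws \<subseteq> lists \<Sigma>"
  shows "cls (concat Ws) \<in> I \<longleftrightarrow>
    (\<exists>ms\<in>good_seqs (length Ws) I. \<forall>j<length Ws. \<forall>(u,v)\<in>tests (ms!j). u @ Ws!j @ v \<in> L)"
proof
  assume "cls (concat Ws) \<in> I"
  moreover have "mprod mult e (map cls Ws) = cls (concat Ws)" by (rule mprod_cls[OF Ws])
  ultimately have "map cls Ws \<in> good_seqs (length Ws) I"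
    unfolding good_seqs_def inputs_def using Ws cls_in_M by (auto simp: subset_iff)
  moreover have "\<forall>(u,v)\<in>tests (map cls Ws ! j). u @ Ws!j @ v \<in> L" if "j < length Ws" for j
  proof -
    have "Ws!j \<in> lists \<Sigma>" using Ws that nth_mem by blast
    then show ?thesis using le_rep_iff_tests[OF cls_in_M] rep_cls that by auto
  qed
  ultimately show "\<exists>ms\<in>good_seqs (length Ws) I. \<forall>j<length Ws. \<forall>(u,v)\<in>tests (ms!j). u @ Ws!j @ v \<in> L"
    by blast
next
  assume "\<exists>ms\<in>good_seqs (length Ws) I. \<forall>j<length Ws. \<forall>(u,v)\<in>tests (ms!j). u @ Ws!j @ v \<in> L"
  then obtain ms where ms: "set ms \<subseteq> M" "length ms = length Ws" "mprod mult e ms \<in> I"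
    and pass: "\<forall>j<length Ws. \<forall>(u,v)\<in>tests (ms!j). u @ Ws!j @ v \<in> L"
    unfolding good_seqs_def inputs_def by auto
  have reps: "set (map rep ms) \<subseteq> lists \<Sigma>" using ms(1) rep_spec(1) by auto
  have "le (Ws!j) (rep (ms!j))" if "j < length Ws" for j
  proof -
    have "ms!j \<in> M" "Ws!j \<in> lists \<Sigma>" using ms Ws that nth_mem by (metis subsetD)+
    then show ?thesis using le_rep_iff_tests pass that by blast
  qed
  then have "list_all2 le Ws (map rep ms)"
    unfolding list_all2_conv_all_nth using ms(2) by simp
  then have "le (concat Ws) (concat (map rep ms))" using le_concat Ws reps by blast
  moreover have "cls (concat (map rep ms)) \<in> I" using ms(3) mprod_rep[OF ms(1)] by simp
  ultimately show "cls (concat Ws) \<in> I"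
    using ideal_downward[OF I] concat_lists Ws reps by blast
qed

end

context finite_syntactic
begin

abbreviation lang_inputs :: "nat \<Rightarrow> 'a option list set" where
  "lang_inputs n \<equiv> inputs n (insert None (Some ` \<Sigma>))"

abbreviation lang_fn :: "'a option list \<Rightarrow> 'a option list \<Rightarrow> bool" where
  "lang_fn \<equiv> \<lambda>xs ys. word_of xs ys \<in> L"

abbreviation monoid_inputs :: "nat \<Rightarrow> 'a list set list set" where
  "monoid_inputs n \<equiv> inputs n M"

abbreviation ideal_fn :: "'a list set set \<Rightarrow> 'a list set list \<Rightarrow> 'a list set list \<Rightarrow> bool" where
  "ideal_fn I \<equiv> \<lambda>x y. mprod mult e (interleave x y) \<in> I"

definition lang_cover :: "nat \<Rightarrow> nat" where
  "lang_cover n = C1 (lang_inputs n) (lang_inputs n) lang_fn"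

lemma finite_lang_inputs: "finite (lang_inputs n)"
  by (rule finite_inputs) (simp add: finite_alphabet)

lemma finite_monoid_inputs: "finite (monoid_inputs n)"
  by (rule finite_inputs[OF finite_M])

lemma N1_lang_eq: "N1_lang \<Sigma> L n = N1 (lang_inputs n) (lang_inputs n) lang_fn"
  unfolding N1_lang_def word_of_def by simp

lemma N1_lang_via_cover: "N1_lang \<Sigma> L n = log 2 (max 1 (real (lang_cover n)))"
  unfolding N1_lang_eq lang_cover_def N1_via_C1 ..

text \<open>N1(M) is a maximum over the finitely many order ideals, the empty one included.\<close>

lemma finite_ideals: "finite {I. order_ideal M ord I}"
  by (rule finite_subset[of _ "Pow M"]) (auto simp: order_ideal_def finite_M)

lemma N1_monoid_ge:
  "order_ideal M ord I \<Longrightarrow>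
     N1 (monoid_inputs n) (monoid_inputs n) (ideal_fn I) \<le> N1_monoid M mult e ord n"
  unfolding N1_monoid_def N1_monoid_ideal_def by (rule Max_ge) (use finite_ideals in auto)

lemma N1_monoid_le:
  assumes "\<And>I. order_ideal M ord I \<Longrightarrow> N1 (monoid_inputs n) (monoid_inputs n) (ideal_fn I) \<le> c"
  shows "N1_monoid M mult e ord n \<le> c"
proof -
  have "order_ideal M ord {}" unfolding order_ideal_def by simp
  then show ?thesis
    unfolding N1_monoid_def N1_monoid_ideal_def using assms finite_ideals
    by (subst Max_le_iff) auto
qed

lemma N1_monoid_nonneg: "N1_monoid M mult e ord n \<ge> 0"
proof -
  have "order_ideal M ord {}" unfolding order_ideal_def by simp
  then show ?thesis using N1_monoid_ge N1_nonneg order_trans by blast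
qed

section \<open>Lower bound: the language reduces to the monoid\<close>

lemma lang_ideal: "order_ideal M ord (cls ` L)"
  unfolding order_ideal_def
proof (intro conjI ballI impI)
  show "cls ` L \<subseteq> M" using L_words cls_in_M by blast
next
  fix y x assume "y \<in> cls ` L" "x \<in> M" "ord x y"
  obtain w where w: "w \<in> L" "y = cls w" using \<open>y \<in> cls ` L\<close> by blast
  obtain a where a: "a \<in> lists \<Sigma>" "x = cls a" using \<open>x \<in> M\<close> by (rule M_cases)
  have "le a w" using ord_cls[of a w] \<open>ord x y\<close> w a L_words by auto
  then show "x \<in> cls ` L" using L_downward w a by auto
qed

lemma cls_in_lang_ideal: "w \<in> lists \<Sigma> \<Longrightarrow> cls w \<in> cls ` L \<longleftrightarrow> w \<in> L"
  using cls_eq_iff L_words L_downward by blast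

text \<open>Alice and Bob replace every letter by its class; the product of the classes lies in
  the ideal [L] exactly when the spelled word lies in L.\<close>

lemma lang_reduces_to_monoid:
  "lang_cover n \<le> C1 (monoid_inputs n) (monoid_inputs n) (ideal_fn (cls ` L))"
proof -
  define \<phi> where "\<phi> z = cls (opt_word z)" for z :: "'a option"
  have opt_word: "opt_word z \<in> lists \<Sigma>" if "z \<in> insert None (Some ` \<Sigma>)" for z
    using that unfolding opt_word_def by auto
  have "lang_cover n = C1 (lang_inputs n) (lang_inputs n) (\<lambda>x y. ideal_fn (cls ` L) (map \<phi> x) (map \<phi> y))"
    unfolding lang_cover_def
  proof (rule C1_cong)
    fix x y assume "x \<in> lang_inputs n" "y \<in> lang_inputs n"
    then have "set (interleave x y) \<subseteq> insert None (Some ` \<Sigma>)"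
      using set_interleave_subset[of x y] unfolding inputs_def by auto
    then have ws: "set (map opt_word (interleave x y)) \<subseteq> lists \<Sigma>"
      unfolding set_map by (intro image_subsetI opt_word) blast
    have "mprod mult e (interleave (map \<phi> x) (map \<phi> y)) = cls (word_of x y)"
      unfolding word_of_def \<phi>_def map_interleave[symmetric] using mprod_cls[OF ws]
      by (simp add: comp_def)
    then show "lang_fn x y = ideal_fn (cls ` L) (map \<phi> x) (map \<phi> y)"
      using cls_in_lang_ideal concat_lists[OF ws] unfolding word_of_def by simp
  qed
  also have "\<dots> \<le> C1 (monoid_inputs n) (monoid_inputs n) (ideal_fn (cls ` L))"
  proof (rule C1_pullback[OF finite_monoid_inputs finite_monoid_inputs])
    show "map \<phi> x \<in> monoid_inputs n" if "x \<in> lang_inputs n" for x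
      using that opt_word cls_in_M unfolding inputs_def \<phi>_def by auto
    then show "map \<phi> y \<in> monoid_inputs n" if "y \<in> lang_inputs n" for y
      using that .
  qed
  finally show ?thesis .
qed

lemma N1_lang_le_N1_monoid: "N1_lang \<Sigma> L n \<le> N1_monoid M mult e ord n"
proof -
  have "N1_lang \<Sigma> L n \<le> N1 (monoid_inputs n) (monoid_inputs n) (ideal_fn (cls ` L))"
    unfolding N1_lang_eq using lang_reduces_to_monoid unfolding lang_cover_def by (rule N1_mono)
  also have "\<dots> \<le> N1_monoid M mult e ord n" by (rule N1_monoid_ge[OF lang_ideal])
  finally show ?thesis .
qed

text \<open>Longer inputs can simulate shorter ones by padding with empty letters.\<close>

lemma mono_lang_cover: "mono lang_cover"
proof
  fix m n :: nat assume "m \<le> n"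
  have "lang_cover m = C1 (lang_inputs m) (lang_inputs m) (\<lambda>x y. lang_fn (pad n x) (pad n y))"
    unfolding lang_cover_def by (rule C1_cong) (simp add: word_of_pad inputs_def)
  also have "\<dots> \<le> lang_cover n"
    unfolding lang_cover_def
  proof (rule C1_pullback[OF finite_lang_inputs finite_lang_inputs])
    show "pad n x \<in> lang_inputs n" if "x \<in> lang_inputs m" for x
      by (rule pad_in_inputs) (use that \<open>m \<le> n\<close> in \<open>auto simp: inputs_def\<close>)
    then show "pad n y \<in> lang_inputs n" if "y \<in> lang_inputs m" for y
      using that .
  qed
  finally show "lang_cover m \<le> lang_cover n" .
qed

lemma mono_N1_lang: "mono (N1_lang \<Sigma> L)"
proof (rule monoI)
  fix m n :: nat assume "m \<le> n"
  then have "lang_cover m \<le> lang_cover n" using mono_lang_cover by (rule monoD[rotated])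
  then have "max 1 (real (lang_cover m)) \<le> max 1 (real (lang_cover n))" by simp
  then show "N1_lang \<Sigma> L m \<le> N1_lang \<Sigma> L n"
    unfolding N1_lang_via_cover by simp
qed

end

section \<open>Upper bound: the monoid reduces to constantly many language instances\<close>

text \<open>The arithmetic of the chunking: with s = n div 4k, b = 8k chunks of length s cover
  inputs of length n, and a chunk together with two context words of length k fits into
  an instance of length n.\<close>

lemma chunk_arith:
  fixes k n :: nat
  assumes "1 \<le> k" "8*k \<le> n"
  shows "n \<le> 8*k * (n div (4*k))" "2*k + 2*k*(n div (4*k)) \<le> n"
proof -
  let ?s = "n div (4*k)"
  have lower: "4 * (k * ?s) \<le> n"
    using div_times_less_eq_dividend[of n "4*k"] by (simp add: algebra_simps)
  have "4 * (k * ?s) + n mod (4*k) = n"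
    using div_mult_mod_eq[of n "4*k"] by (simp add: algebra_simps)
  moreover have "n mod (4*k) < 4*k" using assms(1) by simp
  ultimately have upper: "n < 4 * (k * ?s) + 4 * k" by linarith
  have "1 \<le> ?s" using assms by (simp add: div_greater_zero_iff Suc_le_eq)
  then have "k \<le> k * ?s" by simp
  then have "n \<le> 8 * (k * ?s)" using upper by linarith
  then show "n \<le> 8*k * ?s" by (simp add: mult.assoc)
  show "2*k + 2*k*?s \<le> n" using lower assms(2) by (simp add: algebra_simps)
qed

context finite_syntactic
begin

definition chunk_word :: "nat \<Rightarrow> nat \<Rightarrow> 'a list set list \<Rightarrow> 'a list set list \<Rightarrow> 'a list" where
  "chunk_word s j x y = concat (map rep (interleave (chunk s j x) (chunk s j y)))"

definition chunk_test ::
  "nat \<Rightarrow> nat \<Rightarrow> nat \<times> 'a list \<times> 'a list \<Rightarrow> 'a list set list \<Rightarrow> 'a list set list \<Rightarrow> bool" where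
  "chunk_test n s p x y = (case p of (j,u,v) \<Rightarrow>
     lang_fn (alice_inst n K u v (map rep (chunk s j x))) (bob_inst n K u v (map rep (chunk s j y))))"

lemma chunk_word_in_lists:
  assumes "set x \<subseteq> M" "set y \<subseteq> M"
  shows "chunk_word s j x y \<in> lists \<Sigma>"
proof -
  have "set (interleave (chunk s j x) (chunk s j y)) \<subseteq> M"
    using set_interleave_subset[of "chunk s j x" "chunk s j y"]
      set_chunk_subset[of s j x] set_chunk_subset[of s j y] assms by blast
  then show ?thesis unfolding chunk_word_def using rep_spec(1) by (intro concat_lists) auto
qed

lemma chunk_test_iff:
  assumes "x \<in> monoid_inputs n" "y \<in> monoid_inputs n"
  shows "chunk_test n s (j,u,v) x y \<longleftrightarrow> u @ chunk_word s j x y @ v \<in> L"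
proof -
  have "set x \<subseteq> M" "set y \<subseteq> M" "length x = length y"
    using assms unfolding inputs_def by auto
  then have "set (chunk s j x) \<subseteq> M" "set (chunk s j y) \<subseteq> M"
    and "length (chunk s j x) = length (chunk s j y)"
    using set_chunk_subset[of s j x] set_chunk_subset[of s j y] length_chunk_eq by auto
  then have "word_of (alice_inst n K u v (map rep (chunk s j x))) (bob_inst n K u v (map rep (chunk s j y)))
      = u @ concat (interleave (map rep (chunk s j x)) (map rep (chunk s j y))) @ v"
    using length_rep by (intro word_of_inst) auto
  then show ?thesis unfolding chunk_test_def chunk_word_def map_interleave by simp
qed

lemma C1_chunk_test:
  assumes "(u,v) \<in> tests m" "2*K + 2*K*s \<le> n"
  shows "C1 (monoid_inputs n) (monoid_inputs n) (chunk_test n s (j,u,v)) \<le> lang_cover n"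
proof -
  have uv: "u \<in> lists \<Sigma>" "v \<in> lists \<Sigma>" "length u + 2*K*s + length v \<le> n"
    using tests_words[OF assms(1)] assms(2) by auto
  have inst: "alice_inst n K u v (map rep (chunk s j x)) \<in> lang_inputs n \<and>
      bob_inst n K u v (map rep (chunk s j x)) \<in> lang_inputs n" if "x \<in> monoid_inputs n" for x
  proof -
    have "set (chunk s j x) \<subseteq> M"
      using that set_chunk_subset[of s j x] unfolding inputs_def by blast
    then have words: "set (map rep (chunk s j x)) \<subseteq> lists \<Sigma>"
      and lengths: "\<forall>w\<in>set (map rep (chunk s j x)). length w \<le> K"
      using rep_spec(1) length_rep by auto
    have "length u + 2*K*length (chunk s j x) + length v \<le> length u + 2*K*s + length v"
      by (intro add_right_mono add_left_mono mult_le_mono2 length_chunk_le)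
    then have "length u + 2*K*length (chunk s j x) + length v \<le> n"
      using uv(3) by (rule order_trans)
    then have "length u + 2*K*length (map rep (chunk s j x)) + length v \<le> n"
      by (simp only: length_map)
    from inst_in_inputs[OF uv(1,2) words lengths this] show ?thesis ..
  qed
  have test: "chunk_test n s (j,u,v) = (\<lambda>x y.
      lang_fn (alice_inst n K u v (map rep (chunk s j x))) (bob_inst n K u v (map rep (chunk s j y))))"
    by (intro ext) (simp add: chunk_test_def)
  show ?thesis
    unfolding test lang_cover_def using inst
    by (intro C1_pullback[OF finite_lang_inputs finite_lang_inputs]) auto
qed

definition tests_of :: "nat \<Rightarrow> 'a list set list \<Rightarrow> (nat \<times> 'a list \<times> 'a list) set" where
  "tests_of b ms = Sigma {..<b} (\<lambda>j. tests (ms!j))"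

lemma card_tests_of: "card (tests_of b ms) \<le> b * (card M * card M)"
proof -
  have "card (tests_of b ms) = (\<Sum>j<b. card (tests (ms!j)))"
    unfolding tests_of_def by (rule card_SigmaI) (auto simp: finite_tests)
  also have "\<dots> \<le> (\<Sum>j<b. card M * card M)" by (rule sum_mono) (rule card_tests)
  finally show ?thesis by simp
qed

lemma finite_tests_of: "finite (tests_of b ms)"
  unfolding tests_of_def by (auto simp: finite_tests)

lemma passes_tests_iff:
  assumes xy: "x \<in> monoid_inputs n" "y \<in> monoid_inputs n"
  shows "(\<forall>p\<in>tests_of b ms. chunk_test n s p x y) \<longleftrightarrow>
    (\<forall>j<b. \<forall>(u,v)\<in>tests (ms!j). u @ chunk_word s j x y @ v \<in> L)"
proof
  assume pass: "\<forall>p\<in>tests_of b ms. chunk_test n s p x y"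
  show "\<forall>j<b. \<forall>(u,v)\<in>tests (ms!j). u @ chunk_word s j x y @ v \<in> L"
  proof (intro allI impI ballI, clarify)
    fix j u v assume "j < b" "(u,v) \<in> tests (ms!j)"
    then have "chunk_test n s (j,u,v) x y" using pass unfolding tests_of_def by blast
    then show "u @ chunk_word s j x y @ v \<in> L" using chunk_test_iff[OF xy] by simp
  qed
next
  assume pass: "\<forall>j<b. \<forall>(u,v)\<in>tests (ms!j). u @ chunk_word s j x y @ v \<in> L"
  show "\<forall>p\<in>tests_of b ms. chunk_test n s p x y"
  proof
    fix p assume "p \<in> tests_of b ms"
    then obtain j u v where "p = (j,u,v)" "j < b" "(u,v) \<in> tests (ms!j)"
      unfolding tests_of_def by auto
    then show "chunk_test n s p x y" using pass chunk_test_iff[OF xy] by auto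
  qed
qed

lemma ideal_fn_iff_tests:
  assumes I: "order_ideal M ord I" and xy: "x \<in> monoid_inputs n" "y \<in> monoid_inputs n"
    and bs: "n \<le> b*s"
  shows "ideal_fn I x y \<longleftrightarrow> (\<exists>ms\<in>good_seqs b I. \<forall>p\<in>tests_of b ms. chunk_test n s p x y)"
proof -
  let ?Ws = "map (\<lambda>j. chunk_word s j x y) [0..<b]"
  have x: "set x \<subseteq> M" "length x = n" and y: "set y \<subseteq> M" "length y = n"
    using xy unfolding inputs_def by auto
  have Ws: "set ?Ws \<subseteq> lists \<Sigma>" using chunk_word_in_lists[OF x(1) y(1)] by auto
  have "mprod mult e (interleave x y) = cls (concat (map rep (interleave x y)))"
    using set_interleave_subset[of x y] x y by (intro mprod_rep) auto
  also have "concat (map rep (interleave x y)) = concat ?Ws"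
    using interleave_chunks[of x y b s] x y bs
    by (simp add: chunk_word_def concat_map_concat comp_def)
  finally have "ideal_fn I x y \<longleftrightarrow> cls (concat ?Ws) \<in> I" by simp
  also have "\<dots> \<longleftrightarrow> (\<exists>ms\<in>good_seqs b I. \<forall>j<b. \<forall>(u,v)\<in>tests (ms!j). u @ ?Ws!j @ v \<in> L)"
    using ideal_iff_tests[OF I Ws] by simp
  also have "\<dots> \<longleftrightarrow> (\<exists>ms\<in>good_seqs b I. \<forall>p\<in>tests_of b ms. chunk_test n s p x y)"
    using passes_tests_iff[OF xy] by simp
  finally show ?thesis .
qed

lemma C1_ideal_fn_bound:
  assumes I: "order_ideal M ord I" and bs: "n \<le> b*s" and ns: "2*K + 2*K*s \<le> n"
  shows "C1 (monoid_inputs n) (monoid_inputs n) (ideal_fn I)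
     \<le> card (inputs b M) * (max 1 (lang_cover n)) ^ (b * (card M * card M))"
proof -
  let ?l = "max 1 (lang_cover n)" and ?B = "b * (card M * card M)"
  have each_seq: "C1 (monoid_inputs n) (monoid_inputs n) (\<lambda>x y. \<forall>p\<in>tests_of b ms. chunk_test n s p x y)
      \<le> ?l ^ ?B" if "ms \<in> good_seqs b I" for ms
  proof -
    have "C1 (monoid_inputs n) (monoid_inputs n) (\<lambda>x y. \<forall>p\<in>tests_of b ms. chunk_test n s p x y)
        \<le> (\<Prod>p\<in>tests_of b ms. C1 (monoid_inputs n) (monoid_inputs n) (chunk_test n s p))"
      by (rule C1_Ball[OF finite_monoid_inputs finite_monoid_inputs finite_tests_of])
    also have "\<dots> \<le> (\<Prod>p\<in>tests_of b ms. ?l)"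
    proof (rule prod_mono)
      fix p assume "p \<in> tests_of b ms"
      then obtain j u v where "p = (j,u,v)" "(u,v) \<in> tests (ms!j)" unfolding tests_of_def by auto
      then show "0 \<le> C1 (monoid_inputs n) (monoid_inputs n) (chunk_test n s p) \<and>
          C1 (monoid_inputs n) (monoid_inputs n) (chunk_test n s p) \<le> ?l"
        using C1_chunk_test[OF _ ns] by (simp add: le_max_iff_disj)
    qed
    also have "\<dots> \<le> ?l ^ ?B"
      using card_tests_of by (simp add: power_increasing)
    finally show ?thesis .
  qed
  have "C1 (monoid_inputs n) (monoid_inputs n) (ideal_fn I)
      = C1 (monoid_inputs n) (monoid_inputs n)
          (\<lambda>x y. \<exists>ms\<in>good_seqs b I. \<forall>p\<in>tests_of b ms. chunk_test n s p x y)"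
    by (rule C1_cong) (rule ideal_fn_iff_tests[OF I _ _ bs])
  also have "\<dots> \<le> (\<Sum>ms\<in>good_seqs b I.
      C1 (monoid_inputs n) (monoid_inputs n) (\<lambda>x y. \<forall>p\<in>tests_of b ms. chunk_test n s p x y))"
    by (rule C1_Bex[OF finite_monoid_inputs finite_monoid_inputs finite_good_seqs])
  also have "\<dots> \<le> card (good_seqs b I) * ?l ^ ?B"
    using sum_mono[OF each_seq] by simp
  also have "\<dots> \<le> card (inputs b M) * ?l ^ ?B"
    by (intro mult_right_mono card_mono) (auto simp: good_seqs_def finite_inputs finite_M)
  finally show ?thesis .
qed

lemma N1_monoid_affine_in_N1_lang:
  "\<exists>a c. eventually (\<lambda>n. N1_monoid M mult e ord n \<le> a + c * N1_lang \<Sigma> L n) at_top"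
proof -
  define b where "b = 8*K"
  define A where "A = card (inputs b M)"
  define B where "B = b * (card M * card M)"
  have "replicate b (cls []) \<in> inputs b M" unfolding inputs_def using cls_in_M[of "[]"] by auto
  then have "A \<noteq> 0" unfolding A_def using finite_inputs[OF finite_M, of b] by auto
  then have A_pos: "real A \<ge> 1" by simp
  have "N1_monoid M mult e ord n \<le> log 2 A + B * N1_lang \<Sigma> L n" if "8*K \<le> n" for n
  proof (rule N1_monoid_le)
    fix I assume I: "order_ideal M ord I"
    let ?l = "max 1 (real (lang_cover n))"
    have "C1 (monoid_inputs n) (monoid_inputs n) (ideal_fn I) \<le> A * max 1 (lang_cover n) ^ B"
      using C1_ideal_fn_bound[OF I chunk_arith[OF K_pos that, folded b_def]]
      unfolding A_def B_def .
    then have "real (C1 (monoid_inputs n) (monoid_inputs n) (ideal_fn I))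
        \<le> real (A * max 1 (lang_cover n) ^ B)" by (rule of_nat_mono)
    then have "real (C1 (monoid_inputs n) (monoid_inputs n) (ideal_fn I)) \<le> A * ?l ^ B"
      by (simp add: of_nat_max)
    moreover have "1 * 1 \<le> A * ?l ^ B" using A_pos by (intro mult_mono) auto
    ultimately have "N1 (monoid_inputs n) (monoid_inputs n) (ideal_fn I) \<le> log 2 (A * ?l ^ B)"
      by (intro N1_le_log) auto
    also have "\<dots> = log 2 A + log 2 (?l ^ B)"
      using A_pos by (intro log_mult_pos) auto
    also have "log 2 (?l ^ B) = B * N1_lang \<Sigma> L n"
      unfolding N1_lang_via_cover by (rule log_nat_power) simp
    finally show "N1 (monoid_inputs n) (monoid_inputs n) (ideal_fn I) \<le> log 2 A + B * N1_lang \<Sigma> L n" .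
  qed
  then show ?thesis using eventually_ge_at_top[of "8*K"] by (blast intro: eventually_mono)
qed

end

section \<open>The degenerate case: the language problem is always a rectangle\<close>

context finite_syntactic
begin

text \<open>The degenerate case is that the language problem has cover number at most one at every
  length, i.e. N1(L) vanishes identically; then its 1-inputs are closed under exchange.\<close>

abbreviation rectangular :: bool where
  "rectangular \<equiv> \<forall>n. lang_cover n \<le> 1"

lemma lang_exchange:
  assumes rect: rectangular
    and "x1 \<in> lang_inputs n" "y1 \<in> lang_inputs n" "lang_fn x1 y1"
    and "x2 \<in> lang_inputs n" "y2 \<in> lang_inputs n" "lang_fn x2 y2"
  shows "lang_fn x1 y2"
  using C1_le_1_exchange[OF finite_lang_inputs finite_lang_inputs, where f = lang_fn] rect assms
  unfolding lang_cover_def by blast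

lemma alice_word_in_inputs:
  "w \<in> lists \<Sigma> \<Longrightarrow> map Some w @ replicate k None \<in> lang_inputs (length w + k)"
  unfolding inputs_def by auto

lemma bob_word_in_inputs:
  "w \<in> lists \<Sigma> \<Longrightarrow> replicate k None @ map Some w \<in> lang_inputs (k + length w)"
  unfolding inputs_def by auto

lemma silent_in_inputs: "replicate k None \<in> lang_inputs k"
  unfolding inputs_def by auto

lemma rect_Nil_in_L:
  assumes rect: rectangular and "w \<in> L"
  shows "[] \<in> L"
proof -
  let ?n = "length w" and ?none = "replicate (length w) None"
  have w: "map Some w @ replicate 0 None \<in> lang_inputs ?n"
    using alice_word_in_inputs assms(2) L_words by (metis add_0_right subsetD)
  have "lang_fn ?none (map Some w)" "lang_fn (map Some w) ?none"
    using assms(2) by (simp_all add: word_of_None_Some word_of_Some_None)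
  then have "lang_fn ?none ?none"
    using lang_exchange[OF rect, of ?none ?n "map Some w" "map Some w" ?none]
      w silent_in_inputs by simp
  then show ?thesis by (simp add: word_of_None_None)
qed

text \<open>Exchanging Bob's part between the inputs spelling x @ y and the empty word shows that
  L is closed under concatenation and under taking the two factors.\<close>

lemma rect_append_iff:
  assumes rect: rectangular and Nil: "[] \<in> L" and x: "x \<in> lists \<Sigma>" and y: "y \<in> lists \<Sigma>"
  shows "x @ y \<in> L \<longleftrightarrow> x \<in> L \<and> y \<in> L"
proof -
  let ?n = "length x + length y"
  let ?alice = "map Some x @ replicate (length y) None"
  let ?bob = "replicate (length x) None @ map Some y"
  let ?none = "replicate ?n (None :: 'a option)"
  have none: "?none = replicate (length x) None @ replicate (length y) None"
    by (simp add: replicate_add)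
  have inputs: "?alice \<in> lang_inputs ?n" "?bob \<in> lang_inputs ?n" "?none \<in> lang_inputs ?n"
    using alice_word_in_inputs[OF x] bob_word_in_inputs[OF y] silent_in_inputs by auto
  have words: "word_of ?alice ?none = x" "word_of ?none ?bob = y"
      "word_of ?alice ?bob = x @ y" "word_of ?none ?none = []"
    unfolding none
    by (simp_all add: word_of_append word_of_Some_None word_of_None_Some word_of_None_None)
  note exchange = lang_exchange[OF rect, of _ ?n]
  show ?thesis
  proof
    assume "x @ y \<in> L"
    then have "lang_fn ?alice ?bob" "lang_fn ?none ?none" using words Nil by simp_all
    then have "lang_fn ?alice ?none" "lang_fn ?none ?bob"
      using exchange inputs by blast+
    then show "x \<in> L \<and> y \<in> L" using words by simp
  next
    assume "x \<in> L \<and> y \<in> L"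
    then have "lang_fn ?alice ?none" "lang_fn ?none ?bob" using words by simp_all
    then have "lang_fn ?alice ?bob" using exchange inputs by blast
    then show "x @ y \<in> L" using words by simp
  qed
qed

lemma rect_concat_iff:
  assumes rect: rectangular and Nil: "[] \<in> L"
  shows "set Ws \<subseteq> lists \<Sigma> \<Longrightarrow> concat Ws \<in> L \<longleftrightarrow> (\<forall>w\<in>set Ws. w \<in> L)"
proof (induction Ws)
  case (Cons w Ws)
  then show ?case using rect_append_iff[OF rect Nil, of w "concat Ws"] concat_lists[of Ws \<Sigma>]
    by auto
qed (simp add: Nil)

lemma rect_le:
  assumes rect: rectangular and "w \<in> lists \<Sigma>" "w' \<in> lists \<Sigma>" "w' \<in> L \<Longrightarrow> w \<in> L"
  shows "le w w'"
  unfolding synt_le_def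
proof (intro ballI impI)
  fix u v assume uv: "u \<in> lists \<Sigma>" "v \<in> lists \<Sigma>" "u @ w' @ v \<in> L"
  then have Nil: "[] \<in> L" using rect_Nil_in_L[OF rect] by blast
  note split = rect_append_iff[OF rect Nil]
  have "u \<in> L" "w' \<in> L" "v \<in> L" using uv assms(3) split by auto
  then show "u @ w @ v \<in> L" using uv assms(2,4) split by auto
qed

text \<open>Hence every monoid problem is a rectangle: if the product for (x1,y2) is not below the
  one for (x1,y1), some representative from x1 or y2 falls outside L, which makes the product
  for (x1,y2) equivalent to that for (x1,y1) or (x2,y2).\<close>

lemma rect_ideal_fn:
  assumes rect: rectangular and I: "order_ideal M ord I"
  shows "C1 (monoid_inputs n) (monoid_inputs n) (ideal_fn I) \<le> 1"
proof (rule exchange_C1_le_1)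
  define W where "W x y = concat (map rep (interleave x y))" for x y
  have W: "W x y \<in> lists \<Sigma>" "ideal_fn I x y \<longleftrightarrow> cls (W x y) \<in> I"
    if "x \<in> monoid_inputs n" "y \<in> monoid_inputs n" for x y
  proof -
    have xy: "set (interleave x y) \<subseteq> M"
      using that set_interleave_subset[of x y] unfolding inputs_def by auto
    show "W x y \<in> lists \<Sigma>"
      unfolding W_def by (intro concat_lists) (use xy rep_spec(1) in auto)
    show "ideal_fn I x y \<longleftrightarrow> cls (W x y) \<in> I"
      unfolding W_def using mprod_rep[OF xy] by simp
  qed
  have W_in_L: "W x y \<in> L \<longleftrightarrow> (\<forall>m\<in>set x \<union> set y. rep m \<in> L)"
    if "x \<in> monoid_inputs n" "y \<in> monoid_inputs n" "[] \<in> L" for x y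
  proof -
    have "length x = length y" "set x \<union> set y \<subseteq> M" using that unfolding inputs_def by auto
    then have xy: "set (interleave x y) = set x \<union> set y" "set (interleave x y) \<subseteq> M"
      using set_interleave[of x y] by auto
    then have "set (map rep (interleave x y)) \<subseteq> lists \<Sigma>" using rep_spec(1) by auto
    from rect_concat_iff[OF rect \<open>[] \<in> L\<close> this] show ?thesis
      unfolding W_def using xy(1) by simp
  qed
  fix x1 y1 x2 y2
  assume x1: "x1 \<in> monoid_inputs n" and y1: "y1 \<in> monoid_inputs n" and f1: "ideal_fn I x1 y1"
    and x2: "x2 \<in> monoid_inputs n" and y2: "y2 \<in> monoid_inputs n" and f2: "ideal_fn I x2 y2"
  have "le (W x1 y2) (W x1 y1) \<or> le (W x1 y2) (W x2 y2)"
  proof (cases "W x1 y1 \<in> L \<and> W x2 y2 \<in> L")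
    case True
    then have "[] \<in> L" using rect_Nil_in_L[OF rect] by blast
    then have "W x1 y2 \<in> L" using True W_in_L x1 y1 x2 y2 by auto
    then show ?thesis using rect_le[OF rect] W(1) x1 y1 y2 by blast
  qed (use rect_le[OF rect] W(1) x1 y1 x2 y2 in blast)
  then show "ideal_fn I x1 y2"
    using ideal_downward[OF I] W x1 y1 x2 y2 f1 f2 by metis
qed

lemma N1_monoid_vanishes:
  assumes "\<forall>n. N1_lang \<Sigma> L n = 0"
  shows "\<forall>n. N1_monoid M mult e ord n = 0"
proof
  fix n
  have rect: rectangular
    using assms unfolding N1_lang_eq N1_eq_0_iff lang_cover_def by blast
  have "N1_monoid M mult e ord n \<le> 0"
  proof (rule N1_monoid_le)
    fix I assume "order_ideal M ord I"
    then have "N1 (monoid_inputs n) (monoid_inputs n) (ideal_fn I) = 0"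
      using rect_ideal_fn[OF rect] N1_eq_0_iff by blast
    then show "N1 (monoid_inputs n) (monoid_inputs n) (ideal_fn I) \<le> 0" by simp
  qed
  then show "N1_monoid M mult e ord n = 0" using N1_monoid_nonneg[of n] by simp
qed

end

lemma bigtheta_from_affine_bounds:
  fixes f g :: "nat \<Rightarrow> real"
  assumes mono: "mono g" and gap: "\<And>n. g n = 0 \<or> g n \<ge> 1"
    and lower: "\<And>n. g n \<le> f n"
    and upper: "eventually (\<lambda>n. f n \<le> a + c * g n) at_top"
    and vanish: "\<forall>n. g n = 0 \<Longrightarrow> \<forall>n. f n = 0"
  shows "f \<in> \<Theta>(g)"
proof (cases "\<forall>n. g n = 0")
  case True
  then have "f = g" using vanish by auto
  then show ?thesis by simp
next
  case False
  then obtain n0 where "g n0 \<ge> 1" using gap by blast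
  from eventually_ge_at_top[of n0] have large: "eventually (\<lambda>n. g n \<ge> 1) at_top"
    by eventually_elim (meson \<open>g n0 \<ge> 1\<close> mono monoD order_trans)
  have "eventually (\<lambda>n. norm (f n) \<le> (\<bar>a\<bar> + \<bar>c\<bar>) * norm (g n)) at_top"
    using large upper
  proof eventually_elim
    case (elim n)
    have "f n \<le> a + c * g n" by (fact elim(2))
    also have "\<dots> \<le> \<bar>a\<bar> * g n + \<bar>c\<bar> * g n"
    proof (rule add_mono)
      have "\<bar>a\<bar> * 1 \<le> \<bar>a\<bar> * g n" using elim(1) by (intro mult_left_mono) auto
      then show "a \<le> \<bar>a\<bar> * g n" by linarith
      show "c * g n \<le> \<bar>c\<bar> * g n" using elim(1) by (intro mult_right_mono) auto
    qed
    finally show ?case using elim(1) lower[of n] by (simp add: algebra_simps)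
  qed
  then have "f \<in> O(g)" by (rule bigoI)
  moreover have "g \<in> O(f)"
    using lower gap by (intro bigoI[where c = 1] always_eventually allI) (smt (verit) norm_ge_zero real_norm_def)
  ultimately show ?thesis by (auto simp: bigomega_iff_bigo)
qed

theorem theorem4p1:
  fixes \<Sigma> :: "'a set" and L :: "'a list set"
  assumes "finite \<Sigma>" and "L \<subseteq> lists \<Sigma>" and "regular \<Sigma> L"
  shows "(\<lambda>n. N1_monoid (synt_monoid \<Sigma> L) (synt_mult \<Sigma> L) (synt_unit \<Sigma> L) (synt_order \<Sigma> L) n)
           \<in> \<Theta>(\<lambda>n. N1_lang \<Sigma> L n)"
proof -
  interpret syntactic \<Sigma> L by unfold_locales (rule assms(2))
  interpret finite_syntactic \<Sigma> L
    by unfold_locales (use assms(1) finite_synt_monoid[OF assms(3)] in auto)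
  obtain a c where "eventually (\<lambda>n. N1_monoid M mult e ord n \<le> a + c * N1_lang \<Sigma> L n) at_top"
    using N1_monoid_affine_in_N1_lang by blast
  from bigtheta_from_affine_bounds[OF mono_N1_lang _ N1_lang_le_N1_monoid this N1_monoid_vanishes]
  show ?thesis unfolding N1_lang_eq using N1_0_or_ge_1 by blast
qed

end
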